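(* Let $n$ and $m$ be positive odd integers. Then \[ \int_{-1}^{1}\frac{\sin\bigl(n\sin^{-1}\sqrt t\bigr)\sinh\bigl(m\sinh^{-1}\sqrt t\bigr)}{\cos\bigl(2n\sin^{-1}\sqrt t\bigr)+\cosh\bigl(2m\sinh^{-1}\sqrt t\bigr)}\,\frac{t^j\,dt}{\sqrt{1-t^2}}=\begin{cases}\pi/2, & j=-1,\\ 0, & j=0,1,\ldots,\frac{m+n-2}{2},\end{cases} \] and \[ \int_{-1}^{1}\frac{\cos\bigl(n\sin^{-1}\sqrt t\bigr)\cosh\bigl(m\sinh^{-1}\sqrt t\bigr)}{\cos\bigl(2n\sin^{-1}\sqrt t\bigr)+\cosh\bigl(2m\sinh^{-1}\sqrt t\bigr)}\,t^j\,dt=0,\qquad j=0,1,\ldots,\tfrac{m+n-4}{2}. \]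
   Context: Convention for negative arguments: for $t\ge 0$, $\sqrt t$ is the nonnegative root; for $t<0$, $\sqrt t:=i\sqrt{-t}$, and one sets $\sin^{-1}(iy):=i\sinh^{-1}(y)$ for real $y\ge0$ and $\sinh^{-1}(iy):=i\sin^{-1}(y)$ for $0\le y\le 1$. With this convention the products appearing in the integrands are real-valued (they are values of polynomials in $t$, possibly times $\sqrt{1-t^2}$); in particular $\cos(2n\sin^{-1}\sqrt t)=T_n(1-2t)$ and $\cosh(2m\sinh^{-1}\sqrt t)=T_m(1+2t)$, where $T_k$ is the Chebyshev polynomial of the first kind, $T_k(\cos\theta)=\cos k\theta$. The denominator is positive on $[-1,1]$. *)

theory Defs
  imports "HOL-Analysis.Analysis"
begin

text \<open>Convention of the paper for negative arguments:
  sin^-1(sqrt t) for t < 0 is sin^-1(i sqrt(-t)) = i sinh^-1(sqrt(-t)),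
  sinh^-1(sqrt t) for t < 0 is sinh^-1(i sqrt(-t)) = i sin^-1(sqrt(-t)).\<close>

definition asin_sqrt :: "real \<Rightarrow> complex" where
  "asin_sqrt t = (if 0 \<le> t then complex_of_real (arcsin (sqrt t))
                  else \<i> * complex_of_real (arsinh (sqrt (- t))))"

definition asinh_sqrt :: "real \<Rightarrow> complex" where
  "asinh_sqrt t = (if 0 \<le> t then complex_of_real (arsinh (sqrt t))
                   else \<i> * complex_of_real (arcsin (sqrt (- t))))"

definition den :: "nat \<Rightarrow> nat \<Rightarrow> real \<Rightarrow> complex" where
  "den n m t = cos (2 * of_nat n * asin_sqrt t) + cosh (2 * of_nat m * asinh_sqrt t)"

definition F1 :: "nat \<Rightarrow> nat \<Rightarrow> real \<Rightarrow> complex" where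
  "F1 n m t = sin (of_nat n * asin_sqrt t) * sinh (of_nat m * asinh_sqrt t) / den n m t"

definition F2 :: "nat \<Rightarrow> nat \<Rightarrow> real \<Rightarrow> complex" where
  "F2 n m t = cos (of_nat n * asin_sqrt t) * cosh (of_nat m * asinh_sqrt t) / den n m t"

end

theory Submission
  imports Defs "HOL-Complex_Analysis.Complex_Analysis"
begin

(* Write n = 2k + 1 and m = 2l + 1.  By the odd multiple-angle formulas
   sin ((2k+1) X) = sin X * W_k (cos 2X) and cos ((2k+1) X) = cos X * V_k (cos 2X)
   (Chebyshev polynomials of the third and fourth kind) and their hyperbolic analogues, the
   integrands become rational on [-1, 1]:  F1 = P / D and F2 = sqrt (1 - t^2) A / D with polynomials
   P = sin_poly k l, A = cos_poly k l and D = 2 (P^2 + (1 - t^2) A^2) = cos (2nX) + cosh (2mY) > 0.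

   Put t = cos u and w = e^(iu).  The polynomial R (w) = w^(k+l+1) (P (t) - i sin u A (t)) satisfies
   D = 2 |R|^2 on the unit circle, so P / D and sin u A / D are the real and imaginary parts of
   w^(k+l+1) / (2 R (w)).  Each integral, after the substitution t = cos u, is therefore the real part
   of the mean over the circle of q / R for a polynomial q, which is q (0) / R (0) as soon as R has no
   zero in the closed unit disc.  On the circle this is D > 0.  Inside, R is a multiple of
   z^n h'^m + z'^n h^m with |z| < |z'| and |h'| < |h|, where z, h take the roles of e^(iX) and e^Y;
   such a sum cannot vanish.  For the moments t^j with j in the stated ranges q vanishes at 0, and for
   j = -1 the factor 1 / t is absorbed by dividing w^(k+l+2) + R (w), which vanishes at w = +-i, by
   w^2 + 1; then q (0) / R (0) = 1/2. *)

section \<open>Two-term recurrences and Chebyshev polynomials\<close>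

fun lin_rec :: "'a \<Rightarrow> 'a \<Rightarrow> 'a \<Rightarrow> 'a \<Rightarrow> nat \<Rightarrow> 'a::comm_ring_1" where
  "lin_rec c d x0 x1 0 = x0"
| "lin_rec c d x0 x1 (Suc 0) = x1"
| "lin_rec c d x0 x1 (Suc (Suc n)) = c * lin_rec c d x0 x1 (Suc n) - d * lin_rec c d x0 x1 n"

lemma lin_rec_unique:
  assumes "\<And>n. f (Suc (Suc n)) = c * f (Suc n) - d * f n"
  shows "f n = lin_rec c d (f 0) (f 1) n"
  by (induction n rule: induct_nat_012) (simp_all add: assms)

lemma lin_rec_mult: "lin_rec c d (a * x0) (a * x1) n = a * lin_rec c d x0 x1 n"
  by (induction n rule: induct_nat_012) (simp_all add: algebra_simps)

lemma lin_rec_homogeneous: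
  "lin_rec (w * c) (w\<^sup>2 * d) x0 (w * x1) n = w ^ n * lin_rec c d x0 x1 n"
  by (induction n rule: induct_nat_012) (simp_all add: algebra_simps power2_eq_square)

lemma lin_rec_of_real:
  "lin_rec (of_real c) (of_real d) (of_real x0) (of_real x1) n
     = (of_real (lin_rec c d x0 x1 n) :: 'a::{real_algebra_1,comm_ring_1})"
  by (induction n rule: induct_nat_012) simp_all

lemma lin_rec_power: "lin_rec c 0 1 c n = c ^ n"
  by (induction n rule: induct_nat_012) simp_all

lemma continuous_on_lin_rec:
  fixes c d x0 x1 :: "'b::topological_space \<Rightarrow> 'a::{real_normed_algebra_1,comm_ring_1}"
  assumes "continuous_on S c" "continuous_on S d" "continuous_on S x0" "continuous_on S x1"
  shows "continuous_on S (\<lambda>x. lin_rec (c x) (d x) (x0 x) (x1 x) n)"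
  by (induction n rule: induct_nat_012) (simp_all add: assms continuous_intros)

lemma holomorphic_on_lin_rec:
  assumes "c holomorphic_on S" "d holomorphic_on S" "x0 holomorphic_on S" "x1 holomorphic_on S"
  shows "(\<lambda>w. lin_rec (c w) (d w) (x0 w) (x1 w) n) holomorphic_on S"
  by (induction n rule: induct_nat_012) (simp_all add: assms holomorphic_intros)

(* Chebyshev polynomials of the third and fourth kind:
   V n (cos u) = cos ((n + 1/2) u) / cos (u / 2) and W n (cos u) = sin ((n + 1/2) u) / sin (u / 2). *)
definition cheb_V :: "nat \<Rightarrow> 'a \<Rightarrow> 'a::comm_ring_1" where
  "cheb_V n x = lin_rec (2 * x) 1 1 (2 * x - 1) n"

definition cheb_W :: "nat \<Rightarrow> 'a \<Rightarrow> 'a::comm_ring_1" where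
  "cheb_W n x = lin_rec (2 * x) 1 1 (2 * x + 1) n"

lemma cheb_V_one: "cheb_V n 1 = 1"
  using lin_rec_unique[of "\<lambda>_. 1" 2 1 n] by (simp add: cheb_V_def)

lemma cheb_V_of_real: "cheb_V n (of_real x) = (of_real (cheb_V n x) :: 'a::{real_algebra_1,comm_ring_1})"
  using lin_rec_of_real[of "2 * x" 1 1 "2 * x - 1" n, where 'a='a] by (simp add: cheb_V_def)

lemma cheb_W_of_real: "cheb_W n (of_real x) = (of_real (cheb_W n x) :: 'a::{real_algebra_1,comm_ring_1})"
  using lin_rec_of_real[of "2 * x" 1 1 "2 * x + 1" n, where 'a='a] by (simp add: cheb_W_def)

lemma continuous_on_cheb_V:
  fixes f :: "'b::topological_space \<Rightarrow> real"
  assumes "continuous_on S f"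
  shows "continuous_on S (\<lambda>x. cheb_V n (f x))"
  unfolding cheb_V_def by (intro continuous_intros continuous_on_lin_rec assms)

lemma continuous_on_cheb_W:
  fixes f :: "'b::topological_space \<Rightarrow> real"
  assumes "continuous_on S f"
  shows "continuous_on S (\<lambda>x. cheb_W n (f x))"
  unfolding cheb_W_def by (intro continuous_intros continuous_on_lin_rec assms)

lemma cheb_V_homogeneous: "w ^ n * cheb_V n x = lin_rec (2 * (w * x)) (w\<^sup>2) 1 (2 * (w * x) - w) n"
  using lin_rec_homogeneous[of w "2 * x" 1 1 "2 * x - 1" n] by (simp add: cheb_V_def algebra_simps)

lemma cheb_W_homogeneous: "w ^ n * cheb_W n x = lin_rec (2 * (w * x)) (w\<^sup>2) 1 (2 * (w * x) + w) n"
  using lin_rec_homogeneous[of w "2 * x" 1 1 "2 * x + 1" n] by (simp add: cheb_W_def algebra_simps)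

lemma power_sum_rec:
  fixes z v :: "'a::comm_ring_1"
  assumes "z * v = 1"
  shows "z ^ (a + 4) + e * v ^ (a + 4) = (z\<^sup>2 + v\<^sup>2) * (z ^ (a + 2) + e * v ^ (a + 2)) - (z ^ a + e * v ^ a)"
proof -
  have "(z\<^sup>2 + v\<^sup>2) * (A * z\<^sup>2 + e * (B * v\<^sup>2))
      = A * z ^ 4 + e * (B * v ^ 4) + (A + e * B) * (z * v)\<^sup>2" for A B
    by (simp add: algebra_simps power2_eq_square power4_eq_xxxx)
  from this[of "z ^ a" "v ^ a"] assms show ?thesis unfolding power_add by simp
qed

lemma odd_power_sum_lin_rec:
  fixes z v :: "'a::comm_ring_1"
  assumes "z * v = 1" "z\<^sup>2 + v\<^sup>2 = 2 * x"
  shows "z ^ (2 * k + 1) + e * v ^ (2 * k + 1) = lin_rec (2 * x) 1 (z + e * v) (z ^ 3 + e * v ^ 3) k"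
proof -
  define f where "f k = z ^ (2 * k + 1) + e * v ^ (2 * k + 1)" for k
  have "f (Suc (Suc k)) = 2 * x * f (Suc k) - 1 * f k" for k
  proof -
    have e: "2 * Suc (Suc k) + 1 = (2 * k + 1) + 4" "2 * Suc k + 1 = (2 * k + 1) + 2" by simp_all
    show ?thesis unfolding f_def e power_sum_rec[OF assms(1)] assms(2) by simp
  qed
  from lin_rec_unique[of f, OF this] show ?thesis by (simp add: f_def numeral_3_eq_3)
qed

lemma odd_power_diff_eq_cheb_W:
  fixes z v :: "'a::comm_ring_1"
  assumes "z * v = 1" "z\<^sup>2 + v\<^sup>2 = 2 * x"
  shows "z ^ (2 * k + 1) - v ^ (2 * k + 1) = (z - v) * cheb_W k x"
proof -
  have "z * v\<^sup>2 = v" "v * z\<^sup>2 = z"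
    by (metis assms(1) mult.assoc mult.commute mult_1_left power2_eq_square)+
  then have "z ^ 3 - v ^ 3 = (z - v) * (z\<^sup>2 + v\<^sup>2 + 1)"
    by (simp add: algebra_simps power2_eq_square power3_eq_cube)
  also have "\<dots> = (z - v) * (2 * x + 1)" using assms(2) by simp
  finally have "z ^ 3 - v ^ 3 = (z - v) * (2 * x + 1)" .
  then show ?thesis
    using odd_power_sum_lin_rec[OF assms, of k "-1"] by (simp add: cheb_W_def flip: lin_rec_mult)
qed

lemma odd_power_sum_eq_cheb_V:
  fixes z v :: "'a::comm_ring_1"
  assumes "z * v = 1" "z\<^sup>2 + v\<^sup>2 = 2 * x"
  shows "z ^ (2 * k + 1) + v ^ (2 * k + 1) = (z + v) * cheb_V k x"
proof -
  have "z * v\<^sup>2 = v" "v * z\<^sup>2 = z"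
    by (metis assms(1) mult.assoc mult.commute mult_1_left power2_eq_square)+
  then have "z ^ 3 + v ^ 3 = (z + v) * (z\<^sup>2 + v\<^sup>2 - 1)"
    by (simp add: algebra_simps power2_eq_square power3_eq_cube)
  also have "\<dots> = (z + v) * (2 * x - 1)" using assms(2) by simp
  finally show ?thesis
    using odd_power_sum_lin_rec[OF assms, of k 1] by (simp add: cheb_V_def flip: lin_rec_mult)
qed

lemma
  fixes X :: complex
  shows sin_odd_multiple: "sin (of_nat (2 * k + 1) * X) = sin X * cheb_W k (cos (2 * X))"
    and cos_odd_multiple: "cos (of_nat (2 * k + 1) * X) = cos X * cheb_V k (cos (2 * X))"
proof -
  define z where "z = exp (\<i> * X)"
  define v where "v = exp (- (\<i> * X))"
  have zv: "z * v = 1" by (simp add: z_def v_def exp_minus)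
  have "z\<^sup>2 + v\<^sup>2 = 2 * cos (2 * X)"
    by (simp add: z_def v_def cos_exp_eq exp_double[symmetric] mult_ac)
  note identities = odd_power_diff_eq_cheb_W[OF zv this, of k] odd_power_sum_eq_cheb_V[OF zv this, of k]
  have powers: "exp (\<i> * (of_nat n * X)) = z ^ n" "exp (- (\<i> * (of_nat n * X))) = v ^ n" for n
    by (simp_all add: z_def v_def flip: exp_of_nat_mult) (simp_all add: mult_ac)
  show "sin (of_nat (2 * k + 1) * X) = sin X * cheb_W k (cos (2 * X))"
    unfolding sin_exp_eq powers identities by (simp add: z_def v_def)
  show "cos (of_nat (2 * k + 1) * X) = cos X * cheb_V k (cos (2 * X))"
    unfolding cos_exp_eq powers identities by (simp add: z_def v_def)
qed

lemma
  fixes Y :: complex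
  shows sinh_odd_multiple: "sinh (of_nat (2 * k + 1) * Y) = sinh Y * cheb_W k (cosh (2 * Y))"
    and cosh_odd_multiple: "cosh (of_nat (2 * k + 1) * Y) = cosh Y * cheb_V k (cosh (2 * Y))"
  unfolding sinh_conv_sin cosh_conv_cos
  using sin_odd_multiple[of k "\<i> * Y"] cos_odd_multiple[of k "\<i> * Y"] by (simp_all add: mult_ac)

section \<open>The integrands on the segment\<close>

lemma sinh_of_real: "sinh (complex_of_real r) = of_real (sinh r)"
  by (simp add: sinh_field_def sinh_def exp_of_real[symmetric] scaleR_conv_of_real)

lemma cosh_of_real: "cosh (complex_of_real r) = of_real (cosh r)"
  by (simp add: cosh_field_def cosh_def exp_of_real[symmetric] scaleR_conv_of_real)

lemma sin_mult_i: "sin (\<i> * z) = \<i> * sinh z"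
  by (simp add: sinh_conv_sin)

lemma cos_mult_i: "cos (\<i> * z) = cosh z"
  by (simp add: cosh_conv_cos)

lemma sinh_mult_i: "sinh (\<i> * z) = \<i> * sin z"
  by (simp add: sinh_conv_sin)

lemma cosh_mult_i: "cosh (\<i> * z) = cos z"
  by (simp add: cosh_conv_cos)

lemma asin_sqrt_values:
  assumes "\<bar>t\<bar> \<le> 1"
  shows "sin (asin_sqrt t) = csqrt (of_real t)" "cos (asin_sqrt t) = of_real (sqrt (1 - t))"
proof -
  have "sqrt t \<le> 1" "sqrt (- t) \<le> 1" "-1 \<le> sqrt t"
    using assms real_sqrt_le_mono[of "-1" t] real_sqrt_le_mono[of "-1" "-t"]
    by (auto simp: real_sqrt_minus abs_le_iff)
  then show "sin (asin_sqrt t) = csqrt (of_real t)" "cos (asin_sqrt t) = of_real (sqrt (1 - t))"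
    by (auto simp: asin_sqrt_def csqrt_of_real' sin_of_real cos_of_real sin_arcsin cos_arcsin
        sin_mult_i cos_mult_i sinh_of_real cosh_of_real cosh_arsinh_real)
qed

lemma asinh_sqrt_values:
  assumes "\<bar>t\<bar> \<le> 1"
  shows "sinh (asinh_sqrt t) = csqrt (of_real t)" "cosh (asinh_sqrt t) = of_real (sqrt (1 + t))"
proof -
  have "sqrt t \<le> 1" "sqrt (- t) \<le> 1" "-1 \<le> sqrt (- t)"
    using assms real_sqrt_le_mono[of "-1" t] real_sqrt_le_mono[of "-1" "-t"]
    by (auto simp: real_sqrt_minus abs_le_iff)
  then show "sinh (asinh_sqrt t) = csqrt (of_real t)" "cosh (asinh_sqrt t) = of_real (sqrt (1 + t))"
    by (auto simp: asinh_sqrt_def csqrt_of_real' sin_of_real cos_of_real sin_arcsin cos_arcsin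
        sinh_mult_i cosh_mult_i sinh_of_real cosh_of_real cosh_arsinh_real add.commute)
qed

lemma cos_double_plus_cosh_double:
  fixes a b :: complex
  shows "cos (2 * a) + cosh (2 * b) = 2 * ((sin a * sinh b)\<^sup>2 + (cos a * cosh b)\<^sup>2)"
proof -
  have doubles: "cos (2 * a) = 1 - 2 * sin a ^ 2" "cosh (2 * b) = 1 + 2 * sinh b ^ 2"
    by (simp_all add: cos_double_sin cosh_double cosh_square_eq)
  have squares: "cos a ^ 2 = 1 - sin a ^ 2" "cosh b ^ 2 = 1 + sinh b ^ 2"
    by (simp_all add: cos_squared_eq cosh_square_eq)
  show ?thesis
    unfolding doubles power_mult_distrib squares by (simp add: algebra_simps)
qed

definition sin_poly :: "nat \<Rightarrow> nat \<Rightarrow> 'a \<Rightarrow> 'a::comm_ring_1" where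
  "sin_poly k l t = t * cheb_W k (1 - 2 * t) * cheb_W l (1 + 2 * t)"

definition cos_poly :: "nat \<Rightarrow> nat \<Rightarrow> 'a \<Rightarrow> 'a::comm_ring_1" where
  "cos_poly k l t = cheb_V k (1 - 2 * t) * cheb_V l (1 + 2 * t)"

definition den_poly :: "nat \<Rightarrow> nat \<Rightarrow> real \<Rightarrow> real" where
  "den_poly k l t = 2 * ((sin_poly k l t)\<^sup>2 + (1 - t\<^sup>2) * (cos_poly k l t)\<^sup>2)"

lemma sin_poly_of_real: "sin_poly k l (of_real t) = (of_real (sin_poly k l t) :: 'a::{real_algebra_1,comm_ring_1})"
  by (simp add: sin_poly_def flip: cheb_W_of_real)

lemma cos_poly_of_real: "cos_poly k l (of_real t) = (of_real (cos_poly k l t) :: 'a::{real_algebra_1,comm_ring_1})"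
  by (simp add: cos_poly_def flip: cheb_V_of_real)

lemma continuous_on_sin_poly: "continuous_on S (sin_poly k l :: real \<Rightarrow> real)"
  unfolding sin_poly_def[abs_def] by (intro continuous_intros continuous_on_cheb_W)

lemma continuous_on_cos_poly: "continuous_on S (cos_poly k l :: real \<Rightarrow> real)"
  unfolding cos_poly_def[abs_def] by (intro continuous_intros continuous_on_cheb_V)

lemma continuous_on_den_poly: "continuous_on S (den_poly k l)"
  unfolding den_poly_def[abs_def] by (intro continuous_intros continuous_on_sin_poly continuous_on_cos_poly)

lemma
  assumes "\<bar>t\<bar> \<le> 1"
  shows sin_sinh_on_line: "sin (of_nat (2 * k + 1) * asin_sqrt t) * sinh (of_nat (2 * l + 1) * asinh_sqrt t)
           = of_real (sin_poly k l t)"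
    and cos_cosh_on_line: "cos (of_nat (2 * k + 1) * asin_sqrt t) * cosh (of_nat (2 * l + 1) * asinh_sqrt t)
           = of_real (sqrt (1 - t\<^sup>2) * cos_poly k l t)"
proof -
  note roots = asin_sqrt_values[OF assms] asinh_sqrt_values[OF assms]
  have cosh_double_sinh: "cosh (2 * z) = 1 + 2 * sinh z ^ 2" for z :: complex
    by (simp add: cosh_double cosh_square_eq)
  have doubles: "cos (2 * asin_sqrt t) = 1 - 2 * of_real t" "cosh (2 * asinh_sqrt t) = 1 + 2 * of_real t"
    unfolding cos_double_sin cosh_double_sinh roots by simp_all
  show "sin (of_nat (2 * k + 1) * asin_sqrt t) * sinh (of_nat (2 * l + 1) * asinh_sqrt t)
           = of_real (sin_poly k l t)"
    unfolding sin_odd_multiple sinh_odd_multiple doubles roots sin_poly_of_real[symmetric]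
    by (simp add: sin_poly_def algebra_simps flip: power2_eq_square)
  have "sqrt (1 - t\<^sup>2) = sqrt (1 - t) * sqrt (1 + t)"
    by (simp add: power2_eq_square algebra_simps flip: real_sqrt_mult)
  then show "cos (of_nat (2 * k + 1) * asin_sqrt t) * cosh (of_nat (2 * l + 1) * asinh_sqrt t)
           = of_real (sqrt (1 - t\<^sup>2) * cos_poly k l t)"
    unfolding cos_odd_multiple cosh_odd_multiple doubles roots of_real_mult cos_poly_of_real[symmetric]
    by (simp add: cos_poly_def mult_ac)
qed

lemma den_on_line:
  assumes "\<bar>t\<bar> \<le> 1"
  shows "den (2 * k + 1) (2 * l + 1) t = of_real (den_poly k l t)"
proof -
  have "den (2 * k + 1) (2 * l + 1) t
      = cos (2 * (of_nat (2 * k + 1) * asin_sqrt t)) + cosh (2 * (of_nat (2 * l + 1) * asinh_sqrt t))"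
    unfolding den_def mult.assoc ..
  also have "\<dots> = of_real (2 * ((sin_poly k l t)\<^sup>2 + (sqrt (1 - t\<^sup>2) * cos_poly k l t)\<^sup>2))"
    unfolding cos_double_plus_cosh_double sin_sinh_on_line[OF assms] cos_cosh_on_line[OF assms] by simp
  also have "\<dots> = of_real (den_poly k l t)"
    using assms by (simp add: den_poly_def power_mult_distrib abs_square_le_1)
  finally show ?thesis .
qed

lemma F1_on_line:
  "\<bar>t\<bar> \<le> 1 \<Longrightarrow> F1 (2 * k + 1) (2 * l + 1) t = of_real (sin_poly k l t / den_poly k l t)"
  unfolding F1_def den_on_line sin_sinh_on_line by simp

lemma F2_on_line:
  "\<bar>t\<bar> \<le> 1 \<Longrightarrow> F2 (2 * k + 1) (2 * l + 1) t = of_real (sqrt (1 - t\<^sup>2) * cos_poly k l t / den_poly k l t)"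
  unfolding F2_def den_on_line cos_cosh_on_line by simp

lemma cos_plus_cosh_pos: "x \<noteq> 0 \<Longrightarrow> 0 < cos y + cosh (x::real)"
  using cosh_real_ge_1[of x] cosh_real_one_iff[of x] cos_ge_minus_one[of y] by linarith

lemma Re_den_pos:
  assumes "0 < n" "0 < m" "\<bar>t\<bar> \<le> 1"
  shows "0 < Re (den n m t)"
proof (cases t "0::real" rule: linorder_cases)
  case less
  then have args: "2 * of_nat n * asin_sqrt t = \<i> * of_real (2 * n * arsinh (sqrt (- t)))"
    "2 * of_nat m * asinh_sqrt t = \<i> * of_real (2 * m * arcsin (sqrt (- t)))"
    by (simp_all add: asin_sqrt_def asinh_sqrt_def mult_ac)
  have "den n m t = of_real (cos (2 * m * arcsin (sqrt (- t))) + cosh (2 * n * arsinh (sqrt (- t))))"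
    unfolding den_def args cos_mult_i cosh_mult_i cos_of_real cosh_of_real by simp
  then show ?thesis using assms less by (simp add: cos_plus_cosh_pos)
next
  case equal
  then show ?thesis by (simp add: den_def asin_sqrt_def asinh_sqrt_def)
next
  case greater
  then have args: "2 * of_nat n * asin_sqrt t = of_real (2 * n * arcsin (sqrt t))"
    "2 * of_nat m * asinh_sqrt t = of_real (2 * m * arsinh (sqrt t))"
    by (simp_all add: asin_sqrt_def asinh_sqrt_def)
  have "den n m t = of_real (cos (2 * n * arcsin (sqrt t)) + cosh (2 * m * arsinh (sqrt t)))"
    unfolding den_def args cos_of_real cosh_of_real by simp
  then show ?thesis using assms greater by (simp add: cos_plus_cosh_pos)
qed

lemma den_poly_pos:
  assumes "\<bar>t\<bar> \<le> 1"
  shows "0 < den_poly k l t"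
  using Re_den_pos[of "2 * k + 1" "2 * l + 1" t] assms unfolding den_on_line[OF assms] by simp

section \<open>The spectral factor\<close>

(* w ^ (k + l + 1) * (sin_poly k l t + S * cos_poly k l t) for t = (w + 1/w) / 2 and S = (1/w - w) / 2,
   with the powers of w absorbed into the recurrences (lemma lin_rec_homogeneous), so that it is
   visibly a polynomial in w. *)
definition spectral_factor :: "nat \<Rightarrow> nat \<Rightarrow> complex \<Rightarrow> complex" where
  "spectral_factor k l w =
     (let y1 = w - w\<^sup>2 - 1; y2 = w + w\<^sup>2 + 1 in
        (w\<^sup>2 + 1) / 2 * lin_rec (2 * y1) (w\<^sup>2) 1 (2 * y1 + w) k * lin_rec (2 * y2) (w\<^sup>2) 1 (2 * y2 + w) l
      + (1 - w\<^sup>2) / 2 * lin_rec (2 * y1) (w\<^sup>2) 1 (2 * y1 - w) k * lin_rec (2 * y2) (w\<^sup>2) 1 (2 * y2 - w) l)"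

lemma spectral_factor_eq:
  assumes "w \<noteq> 0"
  shows "spectral_factor k l w
       = w ^ (k + l + 1) * (sin_poly k l ((w + 1 / w) / 2) + (1 / w - w) / 2 * cos_poly k l ((w + 1 / w) / 2))"
proof -
  define t where "t = (w + 1 / w) / 2"
  have ys: "w - w\<^sup>2 - 1 = w * (1 - 2 * t)" "w + w\<^sup>2 + 1 = w * (1 + 2 * t)"
    "(w\<^sup>2 + 1) / 2 = w * t" "(1 - w\<^sup>2) / 2 = w * ((1 / w - w) / 2)"
    using assms by (simp_all add: t_def field_simps power2_eq_square)
  show ?thesis
    unfolding spectral_factor_def Let_def ys cheb_V_homogeneous[symmetric] cheb_W_homogeneous[symmetric]
      t_def[symmetric]
    using assms by (simp add: sin_poly_def cos_poly_def power_add field_simps)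
qed

lemma holomorphic_spectral_factor: "spectral_factor k l holomorphic_on S"
  unfolding spectral_factor_def[abs_def] Let_def
  by (intro holomorphic_intros holomorphic_on_lin_rec) auto

lemma spectral_factor_0_neq_0: "spectral_factor k l 0 \<noteq> 0"
  by (simp add: spectral_factor_def lin_rec_power)

lemma spectral_factor_at_sqrt_minus_one:
  assumes "z\<^sup>2 = -1"
  shows "spectral_factor k l z = - (z ^ (k + l + 2))"
proof -
  have "z \<noteq> 0" using assms by auto
  moreover have "z * - z = 1" using assms by (simp add: power2_eq_square)
  ultimately have "z \<noteq> 0" "1 / z = - z" by (simp_all add: divide_eq_eq mult.commute)
  then show ?thesis
    by (simp add: spectral_factor_eq sin_poly_def cos_poly_def cheb_V_one)
qed

lemma norm_diff_less_norm_add_iff: "norm (a - b) < norm (a + b) \<longleftrightarrow> 0 < Re (a * cnj b)"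
proof -
  have "(norm (a + b))\<^sup>2 = (norm (a - b))\<^sup>2 + 4 * Re (a * cnj b)"
    unfolding cmod_power2 by (simp add: power2_eq_square algebra_simps)
  then show ?thesis
    using power2_le_imp_le[of "norm (a + b)" "norm (a - b)"] power_mono[of "norm (a + b)" "norm (a - b)" 2]
    by (smt (verit) norm_ge_zero)
qed

lemma power_combination_neq_0:
  fixes z z' h h' :: complex
  assumes "norm z < norm z'" "norm h' < norm h" "0 < n"
  shows "z ^ n * h' ^ m + z' ^ n * h ^ m \<noteq> 0"
proof
  assume "z ^ n * h' ^ m + z' ^ n * h ^ m = 0"
  then have "norm (z ^ n * h' ^ m) = norm (z' ^ n * h ^ m)"
    by (simp add: add_eq_0_iff)
  then have "norm z ^ n * norm h' ^ m = norm z' ^ n * norm h ^ m"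
    by (simp add: norm_mult norm_power)
  moreover have "norm z ^ n * norm h' ^ m \<le> norm z ^ n * norm h ^ m"
    using assms(2) by (simp add: mult_left_mono power_mono)
  moreover have "0 < norm h ^ m"
    using assms(2) by (metis norm_ge_zero le_less_trans zero_less_power)
  then have "norm z ^ n * norm h ^ m < norm z' ^ n * norm h ^ m"
    using assms by (intro mult_strict_right_mono power_strict_mono) auto
  ultimately show False by simp
qed

lemma sqrt_one_plus_square_choice:
  assumes "norm w < 1"
  obtains \<tau> where "\<tau>\<^sup>2 = 1 + w\<^sup>2" "0 < Re ((1 + w) * cnj \<tau>)" "0 < Re ((1 - w) * cnj \<tau>)"
proof -
  define \<tau> where "\<tau> = csqrt (1 + w\<^sup>2)"
  have sq: "\<tau>\<^sup>2 = 1 + w\<^sup>2" by (simp add: \<tau>_def)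
  have re: "(Re \<tau>)\<^sup>2 - (Im \<tau>)\<^sup>2 = 1 + (Re w)\<^sup>2 - (Im w)\<^sup>2" and im: "Re \<tau> * Im \<tau> = Re w * Im w"
    using arg_cong[OF sq, of Re] arg_cong[OF sq, of Im] by (simp_all add: power2_eq_square mult.commute)
  have w: "(Re w)\<^sup>2 + (Im w)\<^sup>2 < 1"
    using assms by (simp add: norm_complex_def)
  then have "0 < (Re \<tau>)\<^sup>2"
    using re by (smt (verit) zero_le_power2)
  then have a: "0 < Re \<tau>"
    using Re_csqrt[of "1 + w\<^sup>2"] by (auto simp: \<tau>_def)
  have "Re ((1 + w) * cnj \<tau>) * Re ((1 - w) * cnj \<tau>)
      = (1 - (Re w)\<^sup>2 - (Im w)\<^sup>2) * ((Re \<tau>)\<^sup>2 + (Im w)\<^sup>2)"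
    using re im by simp algebra
  also have "\<dots> > 0" using w a by (intro mult_pos_pos add_pos_nonneg) simp_all
  finally have "0 < Re ((1 + w) * cnj \<tau>) * Re ((1 - w) * cnj \<tau>)" .
  moreover have "Re ((1 + w) * cnj \<tau>) + Re ((1 - w) * cnj \<tau>) = 2 * Re \<tau>"
    by (simp add: algebra_simps)
  ultimately have "0 < Re ((1 + w) * cnj \<tau>)" "0 < Re ((1 - w) * cnj \<tau>)"
    using a by (smt (verit) zero_less_mult_iff)+
  with sq show ?thesis by (rule that)
qed

(* z and h stand for e^(iX) and e^Y with sin^2 X = sinh^2 Y = t, written with square roots
   \<sigma> of 2w and \<tau> of 1 + w^2. *)
lemma power_combination_eq:
  fixes w \<sigma> \<tau> :: complex
  assumes w: "w \<noteq> 0" and \<sigma>: "\<sigma>\<^sup>2 = 2 * w" and \<tau>: "\<tau>\<^sup>2 = 1 + w\<^sup>2"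
  defines "t \<equiv> (w + 1 / w) / 2"
    and "z \<equiv> \<i> * (w - 1 + \<tau>) / \<sigma>" and "z' \<equiv> \<i> * (w - 1 - \<tau>) / \<sigma>"
    and "h \<equiv> (w + 1 + \<tau>) / \<sigma>" and "h' \<equiv> (w + 1 - \<tau>) / \<sigma>"
  shows "z ^ (2 * k + 1) * h' ^ (2 * l + 1) + z' ^ (2 * k + 1) * h ^ (2 * l + 1)
       = - 2 * \<i> * (sin_poly k l t + (1 / w - w) / 2 * cos_poly k l t)"
proof -
  have s0: "\<sigma> \<noteq> 0" using w \<sigma> by auto
  have ss: "\<sigma> * \<sigma> = 2 * w" "\<tau> * \<tau> = 1 + w * w"
    using \<sigma> \<tau> by (simp_all add: power2_eq_square)
  have zz: "z * z' = 1" using s0 w ss unfolding z_def z'_def by (simp add: field_simps)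
  have hh: "h * h' = 1" using s0 w ss unfolding h_def h'_def by (simp add: field_simps)
  have z2: "z\<^sup>2 + z'\<^sup>2 = 2 * (1 - 2 * t)" using s0 w ss unfolding z_def z'_def t_def
    by (simp add: field_simps power2_eq_square)
  have h2: "h\<^sup>2 + h'\<^sup>2 = 2 * (1 + 2 * t)" using s0 w ss unfolding h_def h'_def t_def
    by (simp add: field_simps power2_eq_square)
  have sums: "(z + z') * (h + h') = 2 * \<i> * (w\<^sup>2 - 1) / w" using s0 w ss unfolding z_def z'_def h_def h'_def
    by (simp add: field_simps power2_eq_square) algebra
  have diffs: "(z - z') * (h - h') = 2 * \<i> * (1 + w\<^sup>2) / w" using s0 w ss unfolding z_def z'_def h_def h'_def
    by (simp add: field_simps power2_eq_square)
  have "2 * (z ^ (2 * k + 1) * h' ^ (2 * l + 1) + z' ^ (2 * k + 1) * h ^ (2 * l + 1))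
      = (z ^ (2 * k + 1) + z' ^ (2 * k + 1)) * (h ^ (2 * l + 1) + h' ^ (2 * l + 1))
        - (z ^ (2 * k + 1) - z' ^ (2 * k + 1)) * (h ^ (2 * l + 1) - h' ^ (2 * l + 1))"
    by (simp add: algebra_simps)
  also have "\<dots> = (z + z') * (h + h') * cos_poly k l t
        - (z - z') * (h - h') * (cheb_W k (1 - 2 * t) * cheb_W l (1 + 2 * t))"
    unfolding odd_power_diff_eq_cheb_W[OF zz z2] odd_power_sum_eq_cheb_V[OF zz z2]
      odd_power_diff_eq_cheb_W[OF hh h2] odd_power_sum_eq_cheb_V[OF hh h2]
    by (simp add: cos_poly_def algebra_simps)
  also have "\<dots> = 2 * (- 2 * \<i> * (sin_poly k l t + (1 / w - w) / 2 * cos_poly k l t))"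
    unfolding sums diffs using w by (simp add: sin_poly_def t_def field_simps power2_eq_square)
  finally show ?thesis by (simp only: mult_cancel_left) simp
qed

lemma spectral_factor_neq_0_ball:
  assumes "norm w < 1"
  shows "spectral_factor k l w \<noteq> 0"
proof (cases "w = 0")
  case True
  then show ?thesis by (simp add: spectral_factor_0_neq_0)
next
  case False
  obtain \<tau> where \<tau>: "\<tau>\<^sup>2 = 1 + w\<^sup>2" "0 < Re ((1 + w) * cnj \<tau>)" "0 < Re ((1 - w) * cnj \<tau>)"
    using sqrt_one_plus_square_choice[OF assms] .
  define \<sigma> where "\<sigma> = csqrt (2 * w)"
  have \<sigma>: "\<sigma>\<^sup>2 = 2 * w" by (simp add: \<sigma>_def)
  with False have "0 < norm \<sigma>" by auto
  have "w - 1 + \<tau> = - ((1 - w) - \<tau>)" "w - 1 - \<tau> = - ((1 - w) + \<tau>)" by simp_all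
  then have "norm (w - 1 + \<tau>) = norm ((1 - w) - \<tau>)" "norm (w - 1 - \<tau>) = norm ((1 - w) + \<tau>)"
    by (metis norm_minus_cancel)+
  then have "norm (\<i> * (w - 1 + \<tau>) / \<sigma>) < norm (\<i> * (w - 1 - \<tau>) / \<sigma>)"
    "norm ((w + 1 - \<tau>) / \<sigma>) < norm ((w + 1 + \<tau>) / \<sigma>)"
    using \<tau> \<open>0 < norm \<sigma>\<close> norm_diff_less_norm_add_iff[of "1 - w" \<tau>] norm_diff_less_norm_add_iff[of "1 + w" \<tau>]
    by (auto simp: norm_divide norm_mult divide_strict_right_mono add.commute)
  from power_combination_neq_0[OF this, of "2 * k + 1" "2 * l + 1"]
  show ?thesis
    unfolding power_combination_eq[OF False \<sigma> \<tau>(1)] spectral_factor_eq[OF False] using False by simp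
qed

lemma inverse_real_minus_i_real:
  fixes p q :: real
  assumes "p\<^sup>2 + q\<^sup>2 \<noteq> 0"
  shows "inverse (of_real p - \<i> * of_real q) = (of_real p + \<i> * of_real q) / of_real (p\<^sup>2 + q\<^sup>2)"
proof (rule inverse_unique)
  have "(of_real p - \<i> * of_real q) * (of_real p + \<i> * of_real q) = (of_real (p\<^sup>2 + q\<^sup>2) :: complex)"
    by (simp add: algebra_simps power2_eq_square)
  then show "(of_real p - \<i> * of_real q) * ((of_real p + \<i> * of_real q) / of_real (p\<^sup>2 + q\<^sup>2)) = 1"
    using assms by (simp add: mult.assoc[symmetric] del: of_real_add of_real_power)
qed

lemma spectral_factor_cis:
  "spectral_factor k l (cis \<theta>)
     = cis \<theta> ^ (k + l + 1) * (of_real (sin_poly k l (cos \<theta>)) - \<i> * of_real (sin \<theta> * cos_poly k l (cos \<theta>)))"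
proof -
  have t: "(cis \<theta> + 1 / cis \<theta>) / 2 = of_real (cos \<theta>)"
    and s: "(1 / cis \<theta> - cis \<theta>) / 2 = - \<i> * of_real (sin \<theta>)"
    unfolding divide_inverse[of 1] cis_inverse mult_1 by (simp_all add: cis.ctr Complex_eq)
  show ?thesis
    unfolding spectral_factor_eq[OF cis_neq_zero] t s sin_poly_of_real cos_poly_of_real by simp
qed

lemma sum_squares_on_circle:
  "(sin_poly k l (cos \<theta>))\<^sup>2 + (sin \<theta> * cos_poly k l (cos \<theta>))\<^sup>2 = den_poly k l (cos \<theta>) / 2"
  by (simp add: den_poly_def power_mult_distrib sin_squared_eq)

lemma spectral_factor_cis_inverse:
  "cis \<theta> ^ (k + l + 1) / spectral_factor k l (cis \<theta>)
     = Complex (2 * sin_poly k l (cos \<theta>) / den_poly k l (cos \<theta>))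
               (2 * sin \<theta> * cos_poly k l (cos \<theta>) / den_poly k l (cos \<theta>))"
proof -
  have "(sin_poly k l (cos \<theta>))\<^sup>2 + (sin \<theta> * cos_poly k l (cos \<theta>))\<^sup>2 \<noteq> 0"
    using den_poly_pos[of "cos \<theta>" k l] by (simp add: sum_squares_on_circle)
  then have "inverse (of_real (sin_poly k l (cos \<theta>)) - \<i> * of_real (sin \<theta> * cos_poly k l (cos \<theta>)))
      = (of_real (sin_poly k l (cos \<theta>)) + \<i> * of_real (sin \<theta> * cos_poly k l (cos \<theta>)))
         / of_real ((sin_poly k l (cos \<theta>))\<^sup>2 + (sin \<theta> * cos_poly k l (cos \<theta>))\<^sup>2)"
    by (rule inverse_real_minus_i_real)
  also have "(sin_poly k l (cos \<theta>))\<^sup>2 + (sin \<theta> * cos_poly k l (cos \<theta>))\<^sup>2 = den_poly k l (cos \<theta>) / 2"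
    by (rule sum_squares_on_circle)
  finally have inv: "inverse (of_real (sin_poly k l (cos \<theta>)) - \<i> * of_real (sin \<theta> * cos_poly k l (cos \<theta>)))
      = (of_real (sin_poly k l (cos \<theta>)) + \<i> * of_real (sin \<theta> * cos_poly k l (cos \<theta>)))
         / of_real (den_poly k l (cos \<theta>) / 2)" .
  show ?thesis
    unfolding spectral_factor_cis nonzero_divide_mult_cancel_left[OF power_not_zero[OF cis_neq_zero]]
      divide_inverse[of 1] mult_1 inv by (simp add: complex_eq_iff)
qed

lemma spectral_factor_cis_neq_0: "spectral_factor k l (cis \<theta>) \<noteq> 0"
proof
  assume "spectral_factor k l (cis \<theta>) = 0"
  then have "of_real (sin_poly k l (cos \<theta>)) - \<i> * of_real (sin \<theta> * cos_poly k l (cos \<theta>)) = 0"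
    unfolding spectral_factor_cis by simp
  then have "sin_poly k l (cos \<theta>) = 0" "sin \<theta> * cos_poly k l (cos \<theta>) = 0"
    by (simp_all add: complex_eq_iff)
  with sum_squares_on_circle[of k l \<theta>] have "den_poly k l (cos \<theta>) = 0" by simp
  then show False using den_poly_pos[of "cos \<theta>" k l] by simp
qed

lemma spectral_factor_neq_0_cball:
  assumes "norm w \<le> 1"
  shows "spectral_factor k l w \<noteq> 0"
proof (cases "norm w < 1")
  case True
  then show ?thesis by (rule spectral_factor_neq_0_ball)
next
  case False
  with assms have "norm w = 1" by simp
  then have "cis (Arg w) = w" using rcis_cmod_Arg[of w] by (simp add: rcis_def)
  then show ?thesis using spectral_factor_cis_neq_0[of k l "Arg w"] by simp
qed

section \<open>From the unit circle to the segment\<close>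

lemma holomorphic_mean_value_circle:
  assumes "f holomorphic_on cball 0 1"
  shows "((\<lambda>x. f (cis (2 * pi * x))) has_integral f 0) {0..1}"
proof -
  have "((\<lambda>u. f u / (u - 0)) has_contour_integral 2 * of_real pi * \<i> * f 0) (circlepath 0 1)"
    using assms by (intro Cauchy_integral_circlepath_simple) simp_all
  then have "((\<lambda>x. 2 * of_real pi * \<i> * f (cis (2 * pi * x))) has_integral 2 * of_real pi * \<i> * f 0) {0..1}"
    unfolding has_contour_integral_def
  proof (rule has_integral_spike_finite[OF finite.emptyI, rotated])
    fix x :: real
    assume "x \<in> {0..1} - {}"
    then show "2 * of_real pi * \<i> * f (cis (2 * pi * x))
        = f (circlepath 0 1 x) / (circlepath 0 1 x - 0) * vector_derivative (circlepath 0 1) (at x within {0..1})"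
      using vector_derivative_circlepath01[of x 0 1] by (simp add: circlepath cis_conv_exp mult_ac)
  qed
  then show ?thesis
    by (simp add: has_integral_mult_right_iff)
qed

lemma chebyshev_weight_integral:
  fixes G :: "real \<Rightarrow> real"
  assumes "continuous_on {-1..1} G"
  shows "((\<lambda>t. G t / sqrt (1 - t\<^sup>2)) has_integral pi * integral {0..1} (\<lambda>x. G (cos (2 * pi * x)))) {-1..1}"
proof -
  define f where "f x = G (cos (2 * pi * x))" for x
  define a where "a t = arccos t / (2 * pi)" for t
  define a' where "a' t = - 1 / (2 * pi * sqrt (1 - t\<^sup>2))" for t
  have f: "continuous_on {0..1} f"
    unfolding f_def by (intro continuous_on_compose2[OF assms] continuous_intros) auto
  have "a t \<in> {0..1/2}" if "t \<in> {-1..1}" for t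
    using that arccos_lbound[of t] arccos_ubound[of t] by (auto simp: a_def field_simps)
  then have a_range: "a ` {-1..1} \<subseteq> {0..1}" "(\<lambda>t. 1 - a t) ` {-1..1} \<subseteq> {0..1}"
    by force+
  have a: "continuous_on {-1..1} a"
    unfolding a_def by (intro continuous_intros) auto
  have a_deriv: "(a has_field_derivative a' t) (at t within {-1..1})" if "t \<in> {-1..1} - {-1, 1}" for t
    using that unfolding a_def a'_def
    by (auto intro!: derivative_eq_intros DERIV_arccos simp: field_simps)
  have fa: "f (a t) = G t" "f (1 - a t) = G t" if "t \<in> {-1..1}" for t
    using that by (simp_all add: f_def a_def right_diff_distrib cos_arccos)
  have "((\<lambda>t. a' t *\<^sub>R f (a t)) has_integral (integral {a (-1)..a 1} f - integral {a 1..a (-1)} f)) {-1..1}"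
    by (intro has_integral_substitution_general[OF _ _ a_range(1) f a a_deriv, of "{-1, 1}"]) auto
  then have lower: "((\<lambda>t. a' t * f (a t)) has_integral - integral {0..1/2} f) {-1..1}"
    by (simp add: a_def)
  have "((\<lambda>t. (- a' t) *\<^sub>R f (1 - a t))
      has_integral (integral {1 - a (-1)..1 - a 1} f - integral {1 - a 1..1 - a (-1)} f)) {-1..1}"
    by (intro has_integral_substitution_general[OF _ _ a_range(2) f, of "{-1, 1}"])
      (auto intro!: continuous_intros a derivative_eq_intros a_deriv)
  then have upper: "((\<lambda>t. - a' t * f (1 - a t)) has_integral integral {1/2..1} f) {-1..1}"
    by (simp add: a_def)
  from has_integral_diff[OF upper lower]
  have "((\<lambda>t. - a' t * f (1 - a t) - a' t * f (a t)) has_integral integral {0..1} f) {-1..1}"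
    using Henstock_Kurzweil_Integration.integral_combine[of 0 "1/2" 1 f] integrable_continuous_real[OF f]
    by (simp add: add.commute)
  then have "((\<lambda>t. G t / sqrt (1 - t\<^sup>2) / pi) has_integral integral {0..1} f) {-1..1}"
    by (rule has_integral_spike_finite[OF finite.emptyI, rotated]) (auto simp: fa a'_def divide_simps)
  from has_integral_mult_right[OF this, of pi] show ?thesis
    by (simp add: f_def[abs_def] mult.commute)
qed

lemma has_integral_chebyshev_weight_circle:
  fixes G :: "real \<Rightarrow> real" and \<Psi> :: "complex \<Rightarrow> complex"
  assumes "\<Psi> holomorphic_on cball 0 1" "continuous_on {-1..1} G" "finite X"
    and "\<And>x. x \<in> {0..1} - X \<Longrightarrow> Re (\<Psi> (cis (2 * pi * x))) = G (cos (2 * pi * x))"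
  shows "((\<lambda>t. G t / sqrt (1 - t\<^sup>2)) has_integral pi * Re (\<Psi> 0)) {-1..1}"
proof -
  have "((\<lambda>x. G (cos (2 * pi * x))) has_integral Re (\<Psi> 0)) {0..1}"
    using has_integral_Re[OF holomorphic_mean_value_circle[OF assms(1)]]
    by (rule has_integral_spike_finite[OF assms(3), rotated]) (simp add: assms(4))
  then show ?thesis
    using chebyshev_weight_integral[OF assms(2)] by (simp add: integral_unique)
qed

lemma has_integral_complex_of_real_spike:
  assumes "(g has_integral I) S" "finite X" "\<And>x. x \<in> S - X \<Longrightarrow> f x = complex_of_real (g x)"
  shows "(f has_integral of_real I) S"
  using has_integral_of_real[where 'b=complex, OF assms(1)]
  by (rule has_integral_spike_finite[OF assms(2), rotated]) (simp add: assms(3))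

lemma cis_square_plus_one: "((cis \<theta>)\<^sup>2 + 1) / 2 = cis \<theta> * of_real (cos \<theta>)"
  and one_minus_cis_square: "(1 - (cis \<theta>)\<^sup>2) / 2 = cis \<theta> * (- \<i> * of_real (sin \<theta>))"
  by (simp_all add: complex_eq_iff power2_eq_square cos_add sin_add field_simps)

lemma entire_factor_zero:
  assumes "f holomorphic_on UNIV" "f a = 0"
  obtains g where "g holomorphic_on UNIV" "\<And>z. f z = (z - a) * g z"
proof
  show "(\<lambda>z. if z = a then deriv f a else f z / (z - a)) holomorphic_on UNIV"
    using pole_lemma[OF assms(1), of a] unfolding assms(2) diff_zero by simp
  show "f z = (z - a) * (if z = a then deriv f a else f z / (z - a))" for z
    using assms(2) by auto
qed

lemma cos_2pi_eq_0_unit_interval: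
  assumes "x \<in> {0..1}" "cos (2 * pi * x) = 0"
  shows "x \<in> {1/4, 3/4}"
proof -
  obtain i :: int where "2 * pi * x = of_int i * pi + pi / 2"
    using assms(2) cos_zero_iff_int2 by blast
  then have "pi * (4 * x - 1 - 2 * of_int i) = 0" by (simp add: algebra_simps)
  then have "x = of_int i / 2 + 1/4" by simp
  moreover from this have "i = 0 \<or> i = 1" using assms(1) by auto
  ultimately show ?thesis by auto
qed

section \<open>The moments\<close>

lemma Re_sin_moment_on_circle:
  assumes "j \<le> k + l + 1"
  shows "Re ((((cis \<theta>)\<^sup>2 + 1) / 2) ^ j * cis \<theta> ^ (k + l + 1 - j) / (2 * spectral_factor k l (cis \<theta>)))
       = cos \<theta> ^ j * sin_poly k l (cos \<theta>) / den_poly k l (cos \<theta>)"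
proof -
  have "(((cis \<theta>)\<^sup>2 + 1) / 2) ^ j * cis \<theta> ^ (k + l + 1 - j) = of_real (cos \<theta> ^ j) * cis \<theta> ^ (k + l + 1)"
    using assms unfolding cis_square_plus_one power_mult_distrib by (simp add: mult_ac flip: power_add)
  then have "(((cis \<theta>)\<^sup>2 + 1) / 2) ^ j * cis \<theta> ^ (k + l + 1 - j) / (2 * spectral_factor k l (cis \<theta>))
      = of_real (cos \<theta> ^ j / 2) * (cis \<theta> ^ (k + l + 1) / spectral_factor k l (cis \<theta>))"
    by simp
  then show ?thesis
    unfolding spectral_factor_cis_inverse complex_of_real_mult_Complex by simp
qed

lemma Re_cos_moment_on_circle:
  assumes "j + 1 \<le> k + l + 1"
  shows "Re ((1 - (cis \<theta>)\<^sup>2) / 2 * (((cis \<theta>)\<^sup>2 + 1) / 2) ^ j * cis \<theta> ^ (k + l - j)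
             / (2 * spectral_factor k l (cis \<theta>)))
       = (sin \<theta>)\<^sup>2 * cos \<theta> ^ j * cos_poly k l (cos \<theta>) / den_poly k l (cos \<theta>)"
proof -
  have "(1 - (cis \<theta>)\<^sup>2) / 2 * (((cis \<theta>)\<^sup>2 + 1) / 2) ^ j * cis \<theta> ^ (k + l - j)
      = - \<i> * of_real (sin \<theta> * cos \<theta> ^ j) * cis \<theta> ^ (k + l + 1)"
    using assms unfolding one_minus_cis_square cis_square_plus_one power_mult_distrib
    by (simp add: mult_ac flip: power_add power_Suc)
  then have "(1 - (cis \<theta>)\<^sup>2) / 2 * (((cis \<theta>)\<^sup>2 + 1) / 2) ^ j * cis \<theta> ^ (k + l - j)
             / (2 * spectral_factor k l (cis \<theta>))
      = - \<i> * (of_real (sin \<theta> * cos \<theta> ^ j / 2) * (cis \<theta> ^ (k + l + 1) / spectral_factor k l (cis \<theta>)))"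
    by simp
  then show ?thesis
    unfolding spectral_factor_cis_inverse complex_of_real_mult_Complex by (simp add: power2_eq_square)
qed

lemma F1_moment_vanishes:
  assumes "j \<le> k + l"
  shows "((\<lambda>t. F1 (2 * k + 1) (2 * l + 1) t * of_real (t ^ j / sqrt (1 - t\<^sup>2))) has_integral 0) {-1..1}"
proof -
  define \<Psi> where "\<Psi> w = ((w\<^sup>2 + 1) / 2) ^ j * w ^ (k + l + 1 - j) / (2 * spectral_factor k l w)" for w
  define G where "G t = t ^ j * sin_poly k l t / den_poly k l t" for t
  have "((\<lambda>t. G t / sqrt (1 - t\<^sup>2)) has_integral pi * Re (\<Psi> 0)) {-1..1}"
  proof (rule has_integral_chebyshev_weight_circle[of \<Psi> G "{}"])
    show "\<Psi> holomorphic_on cball 0 1"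
      unfolding \<Psi>_def[abs_def] using spectral_factor_neq_0_cball
      by (intro holomorphic_intros holomorphic_spectral_factor) auto
    show "continuous_on {-1..1} G"
      unfolding G_def[abs_def] using den_poly_pos[of _ k l]
      by (intro continuous_intros continuous_on_sin_poly continuous_on_den_poly) (fastforce simp: abs_le_iff)
  qed (use assms Re_sin_moment_on_circle in \<open>auto simp: \<Psi>_def G_def\<close>)
  then have "((\<lambda>t. G t / sqrt (1 - t\<^sup>2)) has_integral 0) {-1..1}"
    using assms by (simp add: \<Psi>_def zero_power)
  then have "((\<lambda>t. F1 (2 * k + 1) (2 * l + 1) t * of_real (t ^ j / sqrt (1 - t\<^sup>2))) has_integral of_real 0)
      {-1..1}"
  proof (rule has_integral_complex_of_real_spike[OF _ finite.emptyI])
    fix t :: real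
    assume "t \<in> {-1..1} - {}"
    then have "\<bar>t\<bar> \<le> 1" by auto
    show "F1 (2 * k + 1) (2 * l + 1) t * of_real (t ^ j / sqrt (1 - t\<^sup>2)) = of_real (G t / sqrt (1 - t\<^sup>2))"
      unfolding F1_on_line[OF \<open>\<bar>t\<bar> \<le> 1\<close>] G_def of_real_mult[symmetric] by (simp add: mult_ac)
  qed
  then show ?thesis by simp
qed

lemma F2_moment_vanishes:
  assumes "j + 1 \<le> k + l"
  shows "((\<lambda>t. F2 (2 * k + 1) (2 * l + 1) t * of_real (t ^ j)) has_integral 0) {-1..1}"
proof -
  define \<Psi> where
    "\<Psi> w = (1 - w\<^sup>2) / 2 * ((w\<^sup>2 + 1) / 2) ^ j * w ^ (k + l - j) / (2 * spectral_factor k l w)" for w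
  define G where "G t = (1 - t\<^sup>2) * t ^ j * cos_poly k l t / den_poly k l t" for t
  have "((\<lambda>t. G t / sqrt (1 - t\<^sup>2)) has_integral pi * Re (\<Psi> 0)) {-1..1}"
  proof (rule has_integral_chebyshev_weight_circle[of \<Psi> G "{}"])
    show "\<Psi> holomorphic_on cball 0 1"
      unfolding \<Psi>_def[abs_def] using spectral_factor_neq_0_cball
      by (intro holomorphic_intros holomorphic_spectral_factor) auto
    show "continuous_on {-1..1} G"
      unfolding G_def[abs_def] using den_poly_pos[of _ k l]
      by (intro continuous_intros continuous_on_cos_poly continuous_on_den_poly) (fastforce simp: abs_le_iff)
  qed (use assms Re_cos_moment_on_circle in \<open>auto simp: \<Psi>_def G_def sin_squared_eq\<close>)
  then have "((\<lambda>t. G t / sqrt (1 - t\<^sup>2)) has_integral 0) {-1..1}"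
    using assms by (simp add: \<Psi>_def zero_power)
  then have "((\<lambda>t. F2 (2 * k + 1) (2 * l + 1) t * of_real (t ^ j)) has_integral of_real 0) {-1..1}"
  proof (rule has_integral_complex_of_real_spike[OF _ finite.emptyI])
    fix t :: real
    assume "t \<in> {-1..1} - {}"
    then have t: "\<bar>t\<bar> \<le> 1" by auto
    have "G t / sqrt (1 - t\<^sup>2) = (1 - t\<^sup>2) / sqrt (1 - t\<^sup>2) * (t ^ j * cos_poly k l t / den_poly k l t)"
      by (simp add: G_def divide_inverse mult_ac)
    also have "(1 - t\<^sup>2) / sqrt (1 - t\<^sup>2) = sqrt (1 - t\<^sup>2)"
      using t by (simp add: real_div_sqrt abs_square_le_1)
    finally show "F2 (2 * k + 1) (2 * l + 1) t * of_real (t ^ j) = of_real (G t / sqrt (1 - t\<^sup>2))"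
      unfolding F2_on_line[OF t] of_real_mult[symmetric] by (simp add: mult_ac)
  qed
  then show ?thesis by simp
qed

lemma power_plus_spectral_factor_divisible:
  obtains g where "g holomorphic_on UNIV" "\<And>z. z ^ (k + l + 2) + spectral_factor k l z = (z\<^sup>2 + 1) * g z"
proof -
  define Q where "Q z = z ^ (k + l + 2) + spectral_factor k l z" for z
  have Q: "Q holomorphic_on UNIV"
    unfolding Q_def[abs_def] by (intro holomorphic_intros holomorphic_spectral_factor)
  have Q_root: "Q z = 0" if "z\<^sup>2 = -1" for z
    using that by (simp add: Q_def spectral_factor_at_sqrt_minus_one)
  obtain g1 where g1: "g1 holomorphic_on UNIV" "\<And>z. Q z = (z - \<i>) * g1 z"
    using entire_factor_zero[OF Q Q_root[of \<i>]] by auto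
  have "g1 (- \<i>) = 0" using g1(2)[of "- \<i>"] Q_root[of "- \<i>"] by simp
  then obtain g where g: "g holomorphic_on UNIV" "\<And>z. g1 z = (z + \<i>) * g z"
    using entire_factor_zero[OF g1(1), of "- \<i>"] by auto
  have "Q z = (z\<^sup>2 + 1) * g z" for z
    by (simp add: g1(2) g(2) algebra_simps power2_eq_square)
  then show ?thesis
    using that[OF g(1)] unfolding Q_def by blast
qed

lemma Re_inverse_moment_on_circle:
  assumes g: "\<And>z. z ^ (k + l + 2) + spectral_factor k l z = (z\<^sup>2 + 1) * g z" and c: "cos \<theta> \<noteq> 0"
  shows "Re (g (cis \<theta>) / spectral_factor k l (cis \<theta>))
       = 1 / 2 + cheb_W k (1 - 2 * cos \<theta>) * cheb_W l (1 + 2 * cos \<theta>) / den_poly k l (cos \<theta>)"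
proof -
  have "(cis \<theta>)\<^sup>2 + 1 = 2 * cis \<theta> * of_real (cos \<theta>)"
    using cis_square_plus_one[of \<theta>] by simp
  then have "cis \<theta> ^ (k + l + 2) + spectral_factor k l (cis \<theta>) = 2 * cis \<theta> * of_real (cos \<theta>) * g (cis \<theta>)"
    unfolding g by simp
  then have "g (cis \<theta>) = (cis \<theta> ^ (k + l + 2) + spectral_factor k l (cis \<theta>)) / (2 * cis \<theta> * of_real (cos \<theta>))"
    using c by (simp add: eq_divide_eq mult_ac)
  then have "g (cis \<theta>) / spectral_factor k l (cis \<theta>)
      = of_real (1 / (2 * cos \<theta>)) * (cis \<theta> ^ (k + l + 1) / spectral_factor k l (cis \<theta>))
        + of_real (1 / (2 * cos \<theta>)) * cis (- \<theta>)"
    using c spectral_factor_cis_neq_0[of k l \<theta>] by (simp add: field_simps flip: cis_inverse)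
  also have "\<dots> = Complex (1 / 2 + cheb_W k (1 - 2 * cos \<theta>) * cheb_W l (1 + 2 * cos \<theta>) / den_poly k l (cos \<theta>))
      (sin \<theta> * cos_poly k l (cos \<theta>) / (cos \<theta> * den_poly k l (cos \<theta>)) - sin \<theta> / (2 * cos \<theta>))"
    unfolding spectral_factor_cis_inverse complex_of_real_mult_Complex
    using c by (simp add: complex_eq_iff sin_poly_def field_simps)
  finally show ?thesis by simp
qed

lemma F1_inverse_moment:
  "((\<lambda>t. F1 (2 * k + 1) (2 * l + 1) t * of_real (t powi (-1) / sqrt (1 - t\<^sup>2)))
     has_integral of_real (pi / 2)) {-1..1}"
proof -
  obtain g where g: "g holomorphic_on UNIV" "\<And>z. z ^ (k + l + 2) + spectral_factor k l z = (z\<^sup>2 + 1) * g z"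
    using power_plus_spectral_factor_divisible[where k = k and l = l] by blast
  define \<Psi> where "\<Psi> w = g w / spectral_factor k l w - 1 / 2" for w
  define G where "G t = cheb_W k (1 - 2 * t) * cheb_W l (1 + 2 * t) / den_poly k l t" for t
  have "((\<lambda>t. G t / sqrt (1 - t\<^sup>2)) has_integral pi * Re (\<Psi> 0)) {-1..1}"
  proof (rule has_integral_chebyshev_weight_circle[of \<Psi> G "{1/4, 3/4}"])
    show "\<Psi> holomorphic_on cball 0 1"
      unfolding \<Psi>_def[abs_def] using spectral_factor_neq_0_cball
      by (intro holomorphic_intros holomorphic_spectral_factor holomorphic_on_subset[OF g(1)]) auto
    show "continuous_on {-1..1} G"
      unfolding G_def[abs_def] using den_poly_pos[of _ k l]
      by (intro continuous_intros continuous_on_cheb_W continuous_on_den_poly) (fastforce simp: abs_le_iff)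
    show "Re (\<Psi> (cis (2 * pi * x))) = G (cos (2 * pi * x))" if "x \<in> {0..1} - {1/4, 3/4}" for x
    proof -
      have "cos (2 * pi * x) \<noteq> 0" using that cos_2pi_eq_0_unit_interval[of x] by auto
      then show ?thesis
        using Re_inverse_moment_on_circle[OF g(2), of "2 * pi * x"] by (simp add: \<Psi>_def G_def)
    qed
  qed simp
  moreover have "\<Psi> 0 = 1 / 2"
    using g(2)[of 0] spectral_factor_0_neq_0[of k l] by (simp add: \<Psi>_def)
  ultimately have "((\<lambda>t. G t / sqrt (1 - t\<^sup>2)) has_integral pi / 2) {-1..1}"
    by simp
  then show ?thesis
  proof (rule has_integral_complex_of_real_spike[where X="{0}"])
    fix t :: real
    assume "t \<in> {-1..1} - {0}"
    then have t: "\<bar>t\<bar> \<le> 1" "t \<noteq> 0" by auto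
    then show "F1 (2 * k + 1) (2 * l + 1) t * of_real (t powi (-1) / sqrt (1 - t\<^sup>2))
        = of_real (G t / sqrt (1 - t\<^sup>2))"
      unfolding F1_on_line[OF t(1)] of_real_mult[symmetric]
      by (simp add: G_def sin_poly_def power_int_minus1_right field_simps)
  qed simp
qed

theorem theorem1:
  fixes n m :: nat
  assumes "odd n" and "odd m"
  shows "((\<lambda>t. F1 n m t * complex_of_real (t powi (-1) / sqrt (1 - t\<^sup>2)))
            has_integral complex_of_real (pi / 2)) {-1..1}
     \<and> (\<forall>j::nat. 2 * j + 2 \<le> m + n \<longrightarrow>
           ((\<lambda>t. F1 n m t * complex_of_real (t ^ j / sqrt (1 - t\<^sup>2))) has_integral 0) {-1..1})
     \<and> (\<forall>j::nat. 2 * j + 4 \<le> m + n \<longrightarrow>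
           ((\<lambda>t. F2 n m t * complex_of_real (t ^ j)) has_integral 0) {-1..1})"
proof -
  obtain k l where n: "n = 2 * k + 1" and m: "m = 2 * l + 1"
    using assms by (meson oddE)
  have "((\<lambda>t. F1 n m t * complex_of_real (t ^ j / sqrt (1 - t\<^sup>2))) has_integral 0) {-1..1}"
    if "2 * j + 2 \<le> m + n" for j
    unfolding n m using that n m by (intro F1_moment_vanishes) simp
  moreover have "((\<lambda>t. F2 n m t * complex_of_real (t ^ j)) has_integral 0) {-1..1}"
    if "2 * j + 4 \<le> m + n" for j
    unfolding n m using that n m by (intro F2_moment_vanishes) simp
  ultimately show ?thesis
    unfolding n m using F1_inverse_moment by blast
qed

end
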